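(* Let $T$ be any fixed full binary tree with leaves identified with $[n]$, and leaf probabilities $q_1,\dots,q_n\in[0,1]$ with $\sum_iq_i=k\in\mathbb Z$. Let $\mu$ be the distribution of the indicator vector $\boldsymbol\xi\in\{0,1\}^n$ of the output of binary-tree pivotal sampling on $T$. Then $\mu$ is $k$-homogeneous, and for every $\mathcal S\subseteq[n]$ with $\Pr[\xi_\ell=1\ \forall\ell\in\mathcal S]>0$ and every $i\in[n]\setminus\mathcal S$ with positive conditioning probability, $$\sum_{j\in[n]}|\mathcal I^{\mathcal S}_\mu(i,j)|=2-2\Pr[\xi_i=1\mid\xi_\ell=1\ \forall\ell\in\mathcal S]\le 2 .$$ In particular $\mu$ is one-sided $\ell_\infty$-independent with parameter $2$.
   Context: Binary-tree pivotal sampling: let $T$ be a full binary tree whose leaves are identified with an index set, and let $q_i\in[0,1]$ be leaf probabilities with integer sum. Each node can store an index together with a current probability; initially each leaf $i$ stores $i$ with probability $q_i$, and the output set $\mathcal S_{\rm out}$ is empty. Repeatedly choose two sibling nodes that both store indices, say $i$ with probability $q_i$ and $j$ with probability $q_j$, with parent $P$, and remove them. If $q_i+q_j\le1$: with probability $q_i/(q_i+q_j)$ store $i$ at $P$ with probability $q_i+q_j$ ($j$ is rejected), otherwise store $j$ at $P$ with probability $q_i+q_j$ ($i$ is rejected). If $q_i+q_j>1$: with probability $(1-q_i)/(2-q_i-q_j)$ put $j$ into $\mathcal S_{\rm out}$ and store $i$ at $P$ with probability $q_i+q_j-1$; otherwise put $i$ into $\mathcal S_{\rm out}$ and store $j$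 at $P$ with probability $q_i+q_j-1$. When only the root stores an index, put it into $\mathcal S_{\rm out}$ iff its probability is $1$. One-sided influence: $\mathcal I^{\mathcal S}_\mu(i,j)=\Pr[\xi_j=1\mid \xi_i=1,\ \xi_\ell=1\ \forall\ell\in\mathcal S]-\Pr[\xi_j=1\mid \xi_\ell=1\ \forall\ell\in\mathcal S]$ (taken to be $0$ for $j\in\mathcal S$); one-sided $\ell_\infty$-independence with parameter $D$ means $\max_i\sum_j|\mathcal I^{\mathcal S}_\mu(i,j)|\le D$ for all $\mathcal S$. $k$-homogeneous: every realization has exactly $k$ ones. *)

theory Defs
  imports "HOL-Probability.Probability_Mass_Function"
begin

datatype btree = Leaf nat | Node btree btree

fun leaves :: "btree \<Rightarrow> nat list" where
  "leaves (Leaf i) = [i]"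
| "leaves (Node l r) = leaves l @ leaves r"

text \<open>One pivotal merge step of two siblings storing (i, a) and (j, b).
  Input S is the current output set; result: new output set and the
  (index, probability) stored at the parent.\<close>
definition pivot_merge ::
  "nat set \<Rightarrow> nat \<Rightarrow> real \<Rightarrow> nat \<Rightarrow> real \<Rightarrow> (nat set \<times> nat \<times> real) pmf" where
  "pivot_merge S i a j b =
     (if a + b \<le> 1 then
        map_pmf (\<lambda>c. (S, if c then i else j, a + b)) (bernoulli_pmf (a / (a + b)))
      else
        map_pmf (\<lambda>c. (if c then insert j S else insert i S, if c then i else j, a + b - 1))
          (bernoulli_pmf ((1 - a) / (2 - a - b))))"

fun pivot_subtree :: "(nat \<Rightarrow> real) \<Rightarrow> btree \<Rightarrow> (nat set \<times> nat \<times> real) pmf" where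
  "pivot_subtree q (Leaf i) = return_pmf ({}, i, q i)"
| "pivot_subtree q (Node l r) =
     bind_pmf (pivot_subtree q l) (\<lambda>(S1, i, a).
     bind_pmf (pivot_subtree q r) (\<lambda>(S2, j, b).
       pivot_merge (S1 \<union> S2) i a j b))"

definition pivotal_sampling :: "(nat \<Rightarrow> real) \<Rightarrow> btree \<Rightarrow> nat set pmf" where
  "pivotal_sampling q T =
     map_pmf (\<lambda>(S, i, p). if p = 1 then insert i S else S) (pivot_subtree q T)"

text \<open>Distributions on subsets (= indicator vectors xi, xi_i = 1 iff i in the set).\<close>
definition prob_all :: "nat set pmf \<Rightarrow> nat set \<Rightarrow> real" where
  "prob_all \<mu> A = measure_pmf.prob \<mu> {X. A \<subseteq> X}"

definition cond_prob :: "nat set pmf \<Rightarrow> nat \<Rightarrow> nat set \<Rightarrow> real" where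
  "cond_prob \<mu> j A = prob_all \<mu> (insert j A) / prob_all \<mu> A"

definition influence :: "nat set pmf \<Rightarrow> nat set \<Rightarrow> nat \<Rightarrow> nat \<Rightarrow> real" where
  "influence \<mu> S i j =
     (if j \<in> S then 0 else cond_prob \<mu> j (insert i S) - cond_prob \<mu> j S)"

definition homogeneous :: "nat \<Rightarrow> nat set pmf \<Rightarrow> bool" where
  "homogeneous k \<mu> \<longleftrightarrow> (\<forall>X \<in> set_pmf \<mu>. card X = k)"

definition one_sided_linf_indep :: "nat set pmf \<Rightarrow> nat set \<Rightarrow> real \<Rightarrow> bool" where
  "one_sided_linf_indep \<mu> N D \<longleftrightarrow>
     (\<forall>S \<subseteq> N. prob_all \<mu> S > 0 \<longrightarrow>
        (\<forall>i \<in> N. prob_all \<mu> (insert i S) > 0 \<longrightarrow>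
           (\<Sum>j\<in>N. \<bar>influence \<mu> S i j\<bar>) \<le> D))"

end

theory Submission
  imports Defs
begin

text \<open>For a distribution \<open>\<mu>\<close> on subsets of \<open>N\<close> consider the generating function
  \<open>g(x) = E \<Prod>k\<in>N - X. x\<^sub>k\<close> of the complement of the random set \<open>X\<close>. If \<open>g\<close> satisfies the
  Rayleigh inequality in every pair of coordinates, then evaluating it at indicator vectors
  shows that \<open>\<xi>\<^sub>i\<close> and \<open>\<xi>\<^sub>j\<close> are negatively correlated under every conditioning
  \<open>\<xi>\<^sub>\<ell> = 1 (\<ell> \<in> A)\<close>.

  For pivotal sampling this is proved bottom-up. Each subtree yields two functions \<open>K\<close>, \<open>H\<close>:
  the generating function of its unsampled leaves if the index left at its root is eventually
  rejected, resp. accepted. The invariant is that all combinations \<open>c K + d H\<close> are Rayleigh and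
  \<open>K/H\<close> is nondecreasing in every coordinate. Because siblings are processed independently,
  a merge combines the pairs of the two children bilinearly, and for both merge rules the
  coefficient matrices satisfy the determinant conditions that preserve the invariant. An
  integral total mass \<open>k\<close> makes the root probability \<open>0\<close> or \<open>1\<close>, so the output is
  \<open>k\<close>-homogeneous with generating function \<open>K\<close> or \<open>H\<close> of the whole tree.

  Finally, homogeneity makes the influences of \<open>i\<close> sum to zero; all but the
  self-influence \<open>1 - Pr[\<xi>\<^sub>i = 1 | S]\<close> are nonpositive by negative correlation, so their
  absolute values sum to \<open>2 - 2 Pr[\<xi>\<^sub>i = 1 | S]\<close>.\<close>

section \<open>Rayleigh couples\<close>

text \<open>For multiaffine \<open>g\<close> this is the Rayleigh inequality
  \<open>g \<cdot> \<partial>\<^sub>u\<partial>\<^sub>v g \<le> \<partial>\<^sub>u g \<cdot> \<partial>\<^sub>v g\<close>: the difference of its two sides does not depend on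
  \<open>x\<^sub>u, x\<^sub>v\<close>, and at the four corners it is the difference below.\<close>

definition rayleigh :: "(('a \<Rightarrow> real) \<Rightarrow> real) \<Rightarrow> bool" where
  "rayleigh g \<longleftrightarrow> (\<forall>x u v. u \<noteq> v \<longrightarrow>
     g (x(u := 0, v := 0)) * g (x(u := 1, v := 1)) \<le> g (x(u := 1, v := 0)) * g (x(u := 0, v := 1)))"

text \<open>\<open>K/H\<close> is nondecreasing in each coordinate, stated without division.\<close>

definition ratio_mono :: "(('a \<Rightarrow> real) \<Rightarrow> real) \<Rightarrow> (('a \<Rightarrow> real) \<Rightarrow> real) \<Rightarrow> bool" where
  "ratio_mono K H \<longleftrightarrow> (\<forall>x u. K (x(u := 0)) * H (x(u := 1)) \<le> H (x(u := 0)) * K (x(u := 1)))"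

definition rayleigh_couple :: "(('a \<Rightarrow> real) \<Rightarrow> real) \<Rightarrow> (('a \<Rightarrow> real) \<Rightarrow> real) \<Rightarrow> bool" where
  "rayleigh_couple K H \<longleftrightarrow> (\<forall>c d. rayleigh (\<lambda>x. c * K x + d * H x)) \<and> ratio_mono K H"

definition depends_only_on :: "'a set \<Rightarrow> (('a \<Rightarrow> real) \<Rightarrow> real) \<Rightarrow> bool" where
  "depends_only_on L g \<longleftrightarrow> (\<forall>x y. (\<forall>k\<in>L. x k = y k) \<longrightarrow> g x = g y)"

definition bilin :: "real \<Rightarrow> real \<Rightarrow> real \<Rightarrow> real \<Rightarrow> real \<Rightarrow> real \<Rightarrow> real \<Rightarrow> real \<Rightarrow> real" where
  "bilin c11 c12 c21 c22 k h m n = c11 * k * m + c12 * k * n + c21 * h * m + c22 * h * n"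

lemma depends_only_onD: "depends_only_on L g \<Longrightarrow> (\<And>k. k \<in> L \<Longrightarrow> x k = y k) \<Longrightarrow> g x = g y"
  unfolding depends_only_on_def by blast

lemma bilin_cross_le:
  assumes "g11 * g22 - g12 * g21 \<le> 0" "k0 * h1 \<le> h0 * k1" "m0 * n1 \<le> n0 * m1"
  shows "bilin g11 g12 g21 g22 k0 h0 m0 n0 * bilin g11 g12 g21 g22 k1 h1 m1 n1
     \<le> bilin g11 g12 g21 g22 k1 h1 m0 n0 * bilin g11 g12 g21 g22 k0 h0 m1 n1"
proof -
  have "bilin g11 g12 g21 g22 k1 h1 m0 n0 * bilin g11 g12 g21 g22 k0 h0 m1 n1
      - bilin g11 g12 g21 g22 k0 h0 m0 n0 * bilin g11 g12 g21 g22 k1 h1 m1 n1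
      = (g12 * g21 - g11 * g22) * ((k0 * h1 - h0 * k1) * (m0 * n1 - n0 * m1))"
    unfolding bilin_def by (simp add: algebra_simps)
  moreover have "0 \<le> (g12 * g21 - g11 * g22) * ((k0 * h1 - h0 * k1) * (m0 * n1 - n0 * m1))"
    using assms by (intro mult_nonneg_nonneg mult_nonpos_nonpos) auto
  ultimately show ?thesis by linarith
qed

lemma lincomb_cross_le:
  fixes a11 a12 a21 a22 k0 h0 k1 h1 :: real
  assumes "0 \<le> a11 * a22 - a12 * a21" "k0 * h1 \<le> h0 * k1"
  shows "(a11 * k0 + a12 * h0) * (a21 * k1 + a22 * h1) \<le> (a21 * k0 + a22 * h0) * (a11 * k1 + a12 * h1)"
proof -
  have "(a11 * k0 + a12 * h0) * (a21 * k1 + a22 * h1) - (a21 * k0 + a22 * h0) * (a11 * k1 + a12 * h1)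
      = (a11 * a22 - a12 * a21) * (k0 * h1 - h0 * k1)"
    by (simp add: algebra_simps)
  moreover have "(a11 * a22 - a12 * a21) * (k0 * h1 - h0 * k1) \<le> 0"
    using assms by (simp add: mult_nonneg_nonpos)
  ultimately show ?thesis by linarith
qed

context
  fixes K1 H1 K2 H2 :: "('a \<Rightarrow> real) \<Rightarrow> real" and L1 L2 :: "'a set"
  assumes dep1: "depends_only_on L1 K1" "depends_only_on L1 H1"
    and dep2: "depends_only_on L2 K2" "depends_only_on L2 H2"
    and disj: "L1 \<inter> L2 = {}"
begin

lemma bilin_freeze_right:
  assumes "\<And>k. k \<in> L2 \<Longrightarrow> y k = x k"
  shows "bilin c11 c12 c21 c22 (K1 y) (H1 y) (K2 y) (H2 y)
    = (c11 * K2 x + c12 * H2 x) * K1 y + (c21 * K2 x + c22 * H2 x) * H1 y"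
  using depends_only_onD[OF dep2(1), of y x] depends_only_onD[OF dep2(2), of y x] assms
  unfolding bilin_def by (simp add: algebra_simps)

lemma bilin_freeze_left:
  assumes "\<And>k. k \<in> L1 \<Longrightarrow> y k = x k"
  shows "bilin c11 c12 c21 c22 (K1 y) (H1 y) (K2 y) (H2 y)
    = (c11 * K1 x + c21 * H1 x) * K2 y + (c12 * K1 x + c22 * H1 x) * H2 y"
  using depends_only_onD[OF dep1(1), of y x] depends_only_onD[OF dep1(2), of y x] assms
  unfolding bilin_def by (simp add: algebra_simps)

lemma ratio_mono_bilin:
  assumes R1: "ratio_mono K1 H1" and R2: "ratio_mono K2 H2"
    and A: "\<And>m n. 0 \<le> (e11 * m + e12 * n) * (f21 * m + f22 * n) - (e21 * m + e22 * n) * (f11 * m + f12 * n)"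
    and B: "\<And>k h. 0 \<le> (e11 * k + e21 * h) * (f12 * k + f22 * h) - (e12 * k + e22 * h) * (f11 * k + f21 * h)"
  shows "ratio_mono (\<lambda>x. bilin e11 e12 e21 e22 (K1 x) (H1 x) (K2 x) (H2 x))
                    (\<lambda>x. bilin f11 f12 f21 f22 (K1 x) (H1 x) (K2 x) (H2 x))"
    (is "ratio_mono ?K ?H")
  unfolding ratio_mono_def
proof (intro allI)
  fix x u
  consider "u \<notin> L2" | "u \<notin> L1" using disj by blast
  then show "?K (x(u := 0)) * ?H (x(u := 1)) \<le> ?H (x(u := 0)) * ?K (x(u := 1))"
  proof cases
    case 1
    then have e: "bilin c11 c12 c21 c22 (K1 (x(u := t))) (H1 (x(u := t))) (K2 (x(u := t))) (H2 (x(u := t)))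
        = (c11 * K2 x + c12 * H2 x) * K1 (x(u := t)) + (c21 * K2 x + c22 * H2 x) * H1 (x(u := t))"
      for c11 c12 c21 c22 t
      by (intro bilin_freeze_right) auto
    show ?thesis unfolding e
      by (rule lincomb_cross_le) (use A R1 in \<open>auto simp: ratio_mono_def\<close>)
  next
    case 2
    then have e: "bilin c11 c12 c21 c22 (K1 (x(u := t))) (H1 (x(u := t))) (K2 (x(u := t))) (H2 (x(u := t)))
        = (c11 * K1 x + c21 * H1 x) * K2 (x(u := t)) + (c12 * K1 x + c22 * H1 x) * H2 (x(u := t))"
      for c11 c12 c21 c22 t
      by (intro bilin_freeze_left) auto
    show ?thesis unfolding e
      by (rule lincomb_cross_le) (use B R2 in \<open>auto simp: ratio_mono_def\<close>)
  qed
qed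

lemma rayleigh_bilin:
  assumes C1: "rayleigh_couple K1 H1" and C2: "rayleigh_couple K2 H2"
    and det: "g11 * g22 - g12 * g21 \<le> 0"
  shows "rayleigh (\<lambda>x. bilin g11 g12 g21 g22 (K1 x) (H1 x) (K2 x) (H2 x))"
  unfolding rayleigh_def
proof (intro allI impI)
  fix x :: "'a \<Rightarrow> real" and u v :: 'a assume uv: "u \<noteq> v"
  let ?g = "\<lambda>x. bilin g11 g12 g21 g22 (K1 x) (H1 x) (K2 x) (H2 x)"
  have R1: "rayleigh (\<lambda>x. c * K1 x + d * H1 x)" "ratio_mono K1 H1" for c d
    using C1 by (auto simp: rayleigh_couple_def)
  have R2: "rayleigh (\<lambda>x. c * K2 x + d * H2 x)" "ratio_mono K2 H2" for c d
    using C2 by (auto simp: rayleigh_couple_def)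
  consider "u \<notin> L2" "v \<notin> L2" | "u \<notin> L1" "v \<notin> L1" | "u \<notin> L2" "v \<notin> L1" | "u \<notin> L1" "v \<notin> L2"
    using disj by blast
  then show "?g (x(u := 0, v := 0)) * ?g (x(u := 1, v := 1)) \<le> ?g (x(u := 1, v := 0)) * ?g (x(u := 0, v := 1))"
  proof cases
    case 1
    then have "?g (x(u := a, v := b)) = (g11 * K2 x + g12 * H2 x) * K1 (x(u := a, v := b))
        + (g21 * K2 x + g22 * H2 x) * H1 (x(u := a, v := b))" for a b
      by (intro bilin_freeze_right) auto
    then show ?thesis using R1(1) uv unfolding rayleigh_def by presburger
  next
    case 2
    then have "?g (x(u := a, v := b)) = (g11 * K1 x + g21 * H1 x) * K2 (x(u := a, v := b))
        + (g12 * K1 x + g22 * H1 x) * H2 (x(u := a, v := b))" for a b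
      by (intro bilin_freeze_left) auto
    then show ?thesis using R2(1) uv unfolding rayleigh_def by presburger
  next
    case 3
    have "K1 (x(u := a, v := b)) = K1 (x(u := a))" "H1 (x(u := a, v := b)) = H1 (x(u := a))"
         "K2 (x(u := a, v := b)) = K2 (x(v := b))" "H2 (x(u := a, v := b)) = H2 (x(v := b))" for a b
      using 3 uv by (auto intro!: depends_only_onD[OF dep1(1)] depends_only_onD[OF dep1(2)]
          depends_only_onD[OF dep2(1)] depends_only_onD[OF dep2(2)])
    then show ?thesis
      using bilin_cross_le[OF det R1(2)[unfolded ratio_mono_def, rule_format, of x u]
          R2(2)[unfolded ratio_mono_def, rule_format, of x v]] by simp
  next
    case 4
    have "K1 (x(u := a, v := b)) = K1 (x(v := b))" "H1 (x(u := a, v := b)) = H1 (x(v := b))"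
         "K2 (x(u := a, v := b)) = K2 (x(u := a))" "H2 (x(u := a, v := b)) = H2 (x(u := a))" for a b
      using 4 uv by (auto intro!: depends_only_onD[OF dep1(1)] depends_only_onD[OF dep1(2)]
          depends_only_onD[OF dep2(1)] depends_only_onD[OF dep2(2)])
    then show ?thesis
      using bilin_cross_le[OF det R1(2)[unfolded ratio_mono_def, rule_format, of x v]
          R2(2)[unfolded ratio_mono_def, rule_format, of x u]] by (simp add: mult.commute)
  qed
qed

text \<open>The hypotheses are determinant conditions on the coefficient matrices \<open>e\<close>, \<open>f\<close>:
  every combination \<open>c e + d f\<close> has nonpositive determinant, and with either child frozen
  (\<open>K2 = m, H2 = n\<close>, resp. \<open>K1 = k, H1 = h\<close>) the new pair is obtained from the other child's
  pair by a matrix of nonnegative determinant.\<close>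

lemma rayleigh_couple_bilin:
  assumes C1: "rayleigh_couple K1 H1" and C2: "rayleigh_couple K2 H2"
    and det: "\<And>c d. (c * e11 + d * f11) * (c * e22 + d * f22) - (c * e12 + d * f12) * (c * e21 + d * f21) \<le> 0"
    and A: "\<And>m n. 0 \<le> (e11 * m + e12 * n) * (f21 * m + f22 * n) - (e21 * m + e22 * n) * (f11 * m + f12 * n)"
    and B: "\<And>k h. 0 \<le> (e11 * k + e21 * h) * (f12 * k + f22 * h) - (e12 * k + e22 * h) * (f11 * k + f21 * h)"
  shows "rayleigh_couple (\<lambda>x. bilin e11 e12 e21 e22 (K1 x) (H1 x) (K2 x) (H2 x))
                         (\<lambda>x. bilin f11 f12 f21 f22 (K1 x) (H1 x) (K2 x) (H2 x))"
  unfolding rayleigh_couple_def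
proof (intro conjI allI)
  fix c d :: real
  have "(\<lambda>x. c * bilin e11 e12 e21 e22 (K1 x) (H1 x) (K2 x) (H2 x) + d * bilin f11 f12 f21 f22 (K1 x) (H1 x) (K2 x) (H2 x))
     = (\<lambda>x. bilin (c * e11 + d * f11) (c * e12 + d * f12) (c * e21 + d * f21) (c * e22 + d * f22)
          (K1 x) (H1 x) (K2 x) (H2 x))"
    by (simp add: bilin_def algebra_simps)
  then show "rayleigh (\<lambda>x. c * bilin e11 e12 e21 e22 (K1 x) (H1 x) (K2 x) (H2 x) + d * bilin f11 f12 f21 f22 (K1 x) (H1 x) (K2 x) (H2 x))"
    using rayleigh_bilin[OF C1 C2 det] by simp
next
  show "ratio_mono (\<lambda>x. bilin e11 e12 e21 e22 (K1 x) (H1 x) (K2 x) (H2 x))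
                   (\<lambda>x. bilin f11 f12 f21 f22 (K1 x) (H1 x) (K2 x) (H2 x))"
    using C1 C2 A B by (intro ratio_mono_bilin) (auto simp: rayleigh_couple_def)
qed

lemma rayleigh_couple_light_merge:
  assumes "rayleigh_couple K1 H1" "rayleigh_couple K2 H2" "0 \<le> \<alpha>" "\<alpha> \<le> 1"
  shows "rayleigh_couple (\<lambda>x. bilin 1 0 0 0 (K1 x) (H1 x) (K2 x) (H2 x))
                         (\<lambda>x. bilin 0 (1 - \<alpha>) \<alpha> 0 (K1 x) (H1 x) (K2 x) (H2 x))"
proof (rule rayleigh_couple_bilin[OF assms(1,2)])
  fix c d :: real
  have "0 \<le> d * d * (\<alpha> * (1 - \<alpha>))" using assms(3,4) by simp
  then show "(c * 1 + d * 0) * (c * 0 + d * 0) - (c * 0 + d * (1 - \<alpha>)) * (c * 0 + d * \<alpha>) \<le> 0"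
    by (simp add: algebra_simps)
next
  fix m n :: real
  show "0 \<le> (1 * m + 0 * n) * (\<alpha> * m + 0 * n) - (0 * m + 0 * n) * (0 * m + (1 - \<alpha>) * n)"
    using mult_nonneg_nonneg[OF assms(3) zero_le_square[of m]] by (simp add: algebra_simps)
next
  fix k h :: real
  show "0 \<le> (1 * k + 0 * h) * ((1 - \<alpha>) * k + 0 * h) - (0 * k + 0 * h) * (0 * k + \<alpha> * h)"
    using mult_nonneg_nonneg[of "1 - \<alpha>", OF _ zero_le_square[of k]] assms(4) by (simp add: algebra_simps)
qed

lemma rayleigh_couple_heavy_merge:
  assumes "rayleigh_couple K1 H1" "rayleigh_couple K2 H2" "0 \<le> p" "p \<le> 1"
  shows "rayleigh_couple (\<lambda>x. bilin 0 p (1 - p) 0 (K1 x) (H1 x) (K2 x) (H2 x))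
                         (\<lambda>x. bilin 0 0 0 1 (K1 x) (H1 x) (K2 x) (H2 x))"
proof (rule rayleigh_couple_bilin[OF assms(1,2)])
  fix c d :: real
  have "0 \<le> c * c * (p * (1 - p))" using assms(3,4) by simp
  then show "(c * 0 + d * 0) * (c * 0 + d * 1) - (c * p + d * 0) * (c * (1 - p) + d * 0) \<le> 0"
    by (simp add: algebra_simps)
next
  fix m n :: real
  show "0 \<le> (0 * m + p * n) * (0 * m + 1 * n) - ((1 - p) * m + 0 * n) * (0 * m + 0 * n)"
    using mult_nonneg_nonneg[OF assms(3) zero_le_square[of n]] by (simp add: algebra_simps)
next
  fix k h :: real
  show "0 \<le> (0 * k + (1 - p) * h) * (0 * k + 1 * h) - (p * k + 0 * h) * (0 * k + 0 * h)"
    using mult_nonneg_nonneg[of "1 - p", OF _ zero_le_square[of h]] assms(4) by (simp add: algebra_simps)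
qed

end

lemma rayleigh_couple_coordinate: "rayleigh_couple (\<lambda>x. x i) (\<lambda>x. 1)"
  unfolding rayleigh_couple_def rayleigh_def ratio_mono_def by auto


section \<open>Generating functions of pivotal sampling\<close>

fun root_weight :: "(nat \<Rightarrow> real) \<Rightarrow> btree \<Rightarrow> real" where
  "root_weight q (Leaf i) = q i"
| "root_weight q (Node l r) =
     (if root_weight q l + root_weight q r \<le> 1 then root_weight q l + root_weight q r
      else root_weight q l + root_weight q r - 1)"

lemma root_weight_bounds:
  "\<forall>k\<in>set (leaves t). 0 \<le> q k \<and> q k \<le> 1 \<Longrightarrow> 0 \<le> root_weight q t \<and> root_weight q t \<le> 1"
  by (induction t) auto

lemma set_pivot_merge:
  "y \<in> set_pmf (pivot_merge S i a j b) \<Longrightarrow>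
    (a + b \<le> 1 \<and> (y = (S, i, a + b) \<or> y = (S, j, a + b))) \<or>
    (\<not> a + b \<le> 1 \<and> (y = (insert j S, i, a + b - 1) \<or> y = (insert i S, j, a + b - 1)))"
  by (auto simp: pivot_merge_def split: if_splits)

lemma finite_set_pivot_merge: "finite (set_pmf (pivot_merge S i a j b))"
  by (rule finite_subset[of _ "{(S, i, a + b), (S, j, a + b), (insert j S, i, a + b - 1), (insert i S, j, a + b - 1)}"])
     (use set_pivot_merge in blast)+

lemma finite_set_pivot_subtree: "finite (set_pmf (pivot_subtree q t))"
  by (induction t) (auto simp: set_bind_pmf finite_set_pivot_merge split: prod.splits)

lemma set_pivot_subtree_Node:
  "y \<in> set_pmf (pivot_subtree q (Node l r)) \<Longrightarrow> \<exists>S1 i a S2 j b.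
     (S1, i, a) \<in> set_pmf (pivot_subtree q l) \<and> (S2, j, b) \<in> set_pmf (pivot_subtree q r) \<and>
     y \<in> set_pmf (pivot_merge (S1 \<union> S2) i a j b)"
  by (force simp: set_bind_pmf split: prod.splits)

lemma set_pivot_subtree:
  assumes "distinct (leaves t)" and "(S, i, a) \<in> set_pmf (pivot_subtree q t)"
  shows "S \<subseteq> set (leaves t) \<and> i \<in> set (leaves t) \<and> i \<notin> S \<and> a = root_weight q t \<and>
    real (card S) + a = (\<Sum>k\<in>set (leaves t). q k)"
  using assms
proof (induction t arbitrary: S i a)
  case (Leaf m)
  then show ?case by simp
next
  case (Node l r)
  define L1 where "L1 = set (leaves l)"
  define L2 where "L2 = set (leaves r)"
  have d: "distinct (leaves l)" "distinct (leaves r)" "L1 \<inter> L2 = {}"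
    using Node.prems(1) by (auto simp: L1_def L2_def)
  obtain S1 i1 a1 S2 j b where m1: "(S1, i1, a1) \<in> set_pmf (pivot_subtree q l)"
    and m2: "(S2, j, b) \<in> set_pmf (pivot_subtree q r)"
    and m: "(S, i, a) \<in> set_pmf (pivot_merge (S1 \<union> S2) i1 a1 j b)"
    using set_pivot_subtree_Node[OF Node.prems(2)] by blast
  have h1: "S1 \<subseteq> L1" "i1 \<in> L1" "i1 \<notin> S1" "a1 = root_weight q l" "real (card S1) + a1 = (\<Sum>k\<in>L1. q k)"
    using Node.IH(1)[OF d(1) m1] by (auto simp: L1_def)
  have h2: "S2 \<subseteq> L2" "j \<in> L2" "j \<notin> S2" "b = root_weight q r" "real (card S2) + b = (\<Sum>k\<in>L2. q k)"
    using Node.IH(2)[OF d(2) m2] by (auto simp: L2_def)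
  have LN: "set (leaves (Node l r)) = L1 \<union> L2" by (simp add: L1_def L2_def)
  have fS: "finite S1" "finite S2"
    using h1 h2 by (auto simp: L1_def L2_def intro: finite_subset)
  have sum_LN: "(\<Sum>k\<in>L1 \<union> L2. q k) = (\<Sum>k\<in>L1. q k) + (\<Sum>k\<in>L2. q k)"
    using d(3) by (intro sum.union_disjoint) (auto simp: L1_def L2_def)
  have card_Un: "card (S1 \<union> S2) = card S1 + card S2"
    using h1 h2 d(3) fS by (intro card_Un_disjoint) auto
  have sep: "i1 \<notin> S2" "j \<notin> S1" "i1 \<noteq> j" using h1 h2 d(3) by auto
  from set_pivot_merge[OF m] show ?case
    using h1 h2 sep card_Un LN sum_LN fS by (auto simp: card_insert_if)
qed

text \<open>Generating functions of the leaves of \<open>t\<close> left unsampled, assuming the index stored at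
  the root of \<open>t\<close> is eventually rejected, resp. accepted.\<close>

definition gen_reject :: "(nat \<Rightarrow> real) \<Rightarrow> btree \<Rightarrow> (nat \<Rightarrow> real) \<Rightarrow> real" where
  "gen_reject q t x = measure_pmf.expectation (pivot_subtree q t)
      (\<lambda>(S, i, a). \<Prod>k\<in>set (leaves t) - S. x k)"

definition gen_accept :: "(nat \<Rightarrow> real) \<Rightarrow> btree \<Rightarrow> (nat \<Rightarrow> real) \<Rightarrow> real" where
  "gen_accept q t x = measure_pmf.expectation (pivot_subtree q t)
      (\<lambda>(S, i, a). \<Prod>k\<in>set (leaves t) - insert i S. x k)"

lemma depends_only_on_gen_reject: "depends_only_on (set (leaves t)) (gen_reject q t)"
  unfolding depends_only_on_def gen_reject_def
  by (auto intro!: integral_cong prod.cong split: prod.splits)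

lemma depends_only_on_gen_accept: "depends_only_on (set (leaves t)) (gen_accept q t)"
  unfolding depends_only_on_def gen_accept_def
  by (auto intro!: integral_cong prod.cong split: prod.splits)

lemma expectation_cong_set_pmf:
  "(\<And>y. y \<in> set_pmf p \<Longrightarrow> f y = g y) \<Longrightarrow>
    measure_pmf.expectation p f = measure_pmf.expectation p (g :: _ \<Rightarrow> real)"
  by (intro integral_cong_AE) (auto simp: AE_measure_pmf_iff)

lemma expectation_bind_pmf_finite:
  fixes g :: "_ \<Rightarrow> real"
  assumes fin: "finite (set_pmf p)" and "\<And>x. x \<in> set_pmf p \<Longrightarrow> finite (set_pmf (f x))"
  shows "measure_pmf.expectation (bind_pmf p f) g
       = measure_pmf.expectation p (\<lambda>x. measure_pmf.expectation (f x) g)"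
proof -
  have "measure_pmf.expectation (bind_pmf p f) g
      = (\<Sum>x\<in>set_pmf p. pmf p x *\<^sub>R measure_pmf.expectation (f x) g)"
    by (rule pmf_expectation_bind[OF fin assms(2) subset_refl])
  also have "\<dots> = measure_pmf.expectation p (\<lambda>x. measure_pmf.expectation (f x) g)"
    by (rule integral_measure_pmf[OF fin, symmetric]) auto
  finally show ?thesis .
qed

lemma expectation_bilin:
  fixes A B C D :: "_ \<Rightarrow> real"
  assumes "finite (set_pmf P1)" "finite (set_pmf P2)"
  shows "measure_pmf.expectation P1 (\<lambda>y. measure_pmf.expectation P2 (\<lambda>z.
            bilin c11 c12 c21 c22 (A y) (B y) (C z) (D z)))
       = bilin c11 c12 c21 c22 (measure_pmf.expectation P1 A) (measure_pmf.expectation P1 B)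
            (measure_pmf.expectation P2 C) (measure_pmf.expectation P2 D)"
proof -
  have i1: "integrable (measure_pmf P1) f" for f :: "_ \<Rightarrow> real"
    using assms(1) by (rule integrable_measure_pmf_finite)
  have i2: "integrable (measure_pmf P2) f" for f :: "_ \<Rightarrow> real"
    using assms(2) by (rule integrable_measure_pmf_finite)
  have "measure_pmf.expectation P2 (\<lambda>z. bilin c11 c12 c21 c22 (A y) (B y) (C z) (D z))
      = bilin c11 c12 c21 c22 (A y) (B y) (measure_pmf.expectation P2 C) (measure_pmf.expectation P2 D)" for y
    unfolding bilin_def by (simp add: i2 integral_add integral_mult_right_zero mult.assoc)
  then show ?thesis
    unfolding bilin_def
    by (simp add: i1 integral_add integral_mult_left_zero mult.assoc
        mult.left_commute[of _ "measure_pmf.expectation P2 _"])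
qed

lemma expectation_pivot_subtree_Node:
  fixes x :: "nat \<Rightarrow> real" and \<phi> :: "nat set \<times> nat \<times> real \<Rightarrow> real"
  assumes merge: "\<And>S1 i a S2 j b. (S1, i, a) \<in> set_pmf (pivot_subtree q l) \<Longrightarrow>
        (S2, j, b) \<in> set_pmf (pivot_subtree q r) \<Longrightarrow>
        measure_pmf.expectation (pivot_merge (S1 \<union> S2) i a j b) \<phi> =
        bilin c11 c12 c21 c22 (\<Prod>k\<in>set (leaves l) - S1. x k) (\<Prod>k\<in>set (leaves l) - insert i S1. x k)
           (\<Prod>k\<in>set (leaves r) - S2. x k) (\<Prod>k\<in>set (leaves r) - insert j S2. x k)"
  shows "measure_pmf.expectation (pivot_subtree q (Node l r)) \<phi> =
     bilin c11 c12 c21 c22 (gen_reject q l x) (gen_accept q l x) (gen_reject q r x) (gen_accept q r x)"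
proof -
  let ?P1 = "pivot_subtree q l" and ?P2 = "pivot_subtree q r"
  let ?A = "\<lambda>(S, i, a). \<Prod>k\<in>set (leaves l) - S. x k"
  let ?B = "\<lambda>(S, i, a). \<Prod>k\<in>set (leaves l) - insert i S. x k"
  let ?C = "\<lambda>(S, i, a). \<Prod>k\<in>set (leaves r) - S. x k"
  let ?D = "\<lambda>(S, i, a). \<Prod>k\<in>set (leaves r) - insert i S. x k"
  have inner: "measure_pmf.expectation (bind_pmf ?P2 (\<lambda>(S2, j, b). pivot_merge (S1 \<union> S2) i a j b)) \<phi>
      = measure_pmf.expectation ?P2 (\<lambda>z. bilin c11 c12 c21 c22 (?A y) (?B y) (?C z) (?D z))"
    if y: "y = (S1, i, a)" "y \<in> set_pmf ?P1" for y S1 i a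
  proof -
    have "measure_pmf.expectation (bind_pmf ?P2 (\<lambda>(S2, j, b). pivot_merge (S1 \<union> S2) i a j b)) \<phi>
      = measure_pmf.expectation ?P2
          (\<lambda>z. measure_pmf.expectation ((\<lambda>(S2, j, b). pivot_merge (S1 \<union> S2) i a j b) z) \<phi>)"
      by (rule expectation_bind_pmf_finite)
         (auto simp: finite_set_pivot_subtree finite_set_pivot_merge split: prod.splits)
    also have "\<dots> = measure_pmf.expectation ?P2 (\<lambda>z. bilin c11 c12 c21 c22 (?A y) (?B y) (?C z) (?D z))"
      by (rule expectation_cong_set_pmf) (use merge y in \<open>auto split: prod.splits\<close>)
    finally show ?thesis .
  qed
  have "measure_pmf.expectation (pivot_subtree q (Node l r)) \<phi>
      = measure_pmf.expectation ?P1 (\<lambda>y. measure_pmf.expectation ((\<lambda>(S1, i, a).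
          bind_pmf ?P2 (\<lambda>(S2, j, b). pivot_merge (S1 \<union> S2) i a j b)) y) \<phi>)"
    unfolding pivot_subtree.simps
    by (rule expectation_bind_pmf_finite)
       (auto simp: finite_set_pivot_subtree finite_set_pivot_merge set_bind_pmf split: prod.splits)
  also have "\<dots> = measure_pmf.expectation ?P1 (\<lambda>y. measure_pmf.expectation ?P2 (\<lambda>z.
            bilin c11 c12 c21 c22 (?A y) (?B y) (?C z) (?D z)))"
    by (rule expectation_cong_set_pmf) (use inner in \<open>auto split: prod.splits\<close>)
  also have "\<dots> = bilin c11 c12 c21 c22 (gen_reject q l x) (gen_accept q l x) (gen_reject q r x) (gen_accept q r x)"
    unfolding gen_reject_def gen_accept_def by (rule expectation_bilin) (auto simp: finite_set_pivot_subtree)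
  finally show ?thesis .
qed

lemma prod_Diff_Un_disjoint:
  assumes "finite L1" "finite L2" "L1 \<inter> L2 = {}" "A \<subseteq> L1" "B \<subseteq> L2"
  shows "(\<Prod>k\<in>(L1 \<union> L2) - (A \<union> B). x k) = (\<Prod>k\<in>L1 - A. x k) * (\<Prod>k\<in>L2 - B. (x k :: 'a :: comm_monoid_mult))"
proof -
  have "(L1 \<union> L2) - (A \<union> B) = (L1 - A) \<union> (L2 - B)" using assms by auto
  then show ?thesis using assms by (simp add: prod.union_disjoint Int_Diff disjoint_iff)
qed

context
  fixes L1 L2 S1 S2 :: "nat set" and i j :: nat and a b :: real and x :: "nat \<Rightarrow> real"
  assumes fin: "finite L1" "finite L2" and disj: "L1 \<inter> L2 = {}"
    and S1: "S1 \<subseteq> L1" "i \<in> L1" and S2: "S2 \<subseteq> L2" "j \<in> L2"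
    and ab: "0 \<le> a" "a \<le> 1" "0 \<le> b" "b \<le> 1"
begin

private lemma prod_split:
  "(\<Prod>k\<in>(L1 \<union> L2) - (S1 \<union> S2). x k) = (\<Prod>k\<in>L1 - S1. x k) * (\<Prod>k\<in>L2 - S2. x k)"
  "(\<Prod>k\<in>(L1 \<union> L2) - insert i (S1 \<union> S2). x k) = (\<Prod>k\<in>L1 - insert i S1. x k) * (\<Prod>k\<in>L2 - S2. x k)"
  "(\<Prod>k\<in>(L1 \<union> L2) - insert j (S1 \<union> S2). x k) = (\<Prod>k\<in>L1 - S1. x k) * (\<Prod>k\<in>L2 - insert j S2. x k)"
  "(\<Prod>k\<in>(L1 \<union> L2) - insert i (insert j (S1 \<union> S2)). x k) = (\<Prod>k\<in>L1 - insert i S1. x k) * (\<Prod>k\<in>L2 - insert j S2. x k)"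
  "(\<Prod>k\<in>(L1 \<union> L2) - insert j (insert i (S1 \<union> S2)). x k) = (\<Prod>k\<in>L1 - insert i S1. x k) * (\<Prod>k\<in>L2 - insert j S2. x k)"
  using prod_Diff_Un_disjoint[OF fin disj, of S1 S2 x] prod_Diff_Un_disjoint[OF fin disj, of "insert i S1" S2 x]
    prod_Diff_Un_disjoint[OF fin disj, of S1 "insert j S2" x]
    prod_Diff_Un_disjoint[OF fin disj, of "insert i S1" "insert j S2" x] S1 S2
  by (simp_all add: insert_commute)

private lemma light_prob_bounds: "0 \<le> a / (a + b)" "a / (a + b) \<le> 1"
  using ab by (auto simp: divide_le_eq_1)

private lemma heavy_prob_bounds:
  "\<not> a + b \<le> 1 \<Longrightarrow> 0 \<le> (1 - a) / (2 - a - b)" "\<not> a + b \<le> 1 \<Longrightarrow> (1 - a) / (2 - a - b) \<le> 1"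
  using ab by (auto simp: divide_le_eq_1)

lemma expectation_pivot_merge_light:
  assumes "a + b \<le> 1"
  shows "measure_pmf.expectation (pivot_merge (S1 \<union> S2) i a j b) (\<lambda>(S, i', a'). \<Prod>k\<in>(L1 \<union> L2) - S. x k)
      = bilin 1 0 0 0 (\<Prod>k\<in>L1 - S1. x k) (\<Prod>k\<in>L1 - insert i S1. x k)
          (\<Prod>k\<in>L2 - S2. x k) (\<Prod>k\<in>L2 - insert j S2. x k)"
    and "measure_pmf.expectation (pivot_merge (S1 \<union> S2) i a j b) (\<lambda>(S, i', a'). \<Prod>k\<in>(L1 \<union> L2) - insert i' S. x k)
      = bilin 0 (1 - a / (a + b)) (a / (a + b)) 0 (\<Prod>k\<in>L1 - S1. x k) (\<Prod>k\<in>L1 - insert i S1. x k)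
          (\<Prod>k\<in>L2 - S2. x k) (\<Prod>k\<in>L2 - insert j S2. x k)"
  using assms light_prob_bounds by (simp_all add: pivot_merge_def prod_split bilin_def algebra_simps)

lemma expectation_pivot_merge_heavy:
  assumes "\<not> a + b \<le> 1"
  shows "measure_pmf.expectation (pivot_merge (S1 \<union> S2) i a j b) (\<lambda>(S, i', a'). \<Prod>k\<in>(L1 \<union> L2) - S. x k)
      = bilin 0 ((1 - a) / (2 - a - b)) (1 - (1 - a) / (2 - a - b)) 0 (\<Prod>k\<in>L1 - S1. x k)
          (\<Prod>k\<in>L1 - insert i S1. x k) (\<Prod>k\<in>L2 - S2. x k) (\<Prod>k\<in>L2 - insert j S2. x k)"
    and "measure_pmf.expectation (pivot_merge (S1 \<union> S2) i a j b) (\<lambda>(S, i', a'). \<Prod>k\<in>(L1 \<union> L2) - insert i' S. x k)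
      = bilin 0 0 0 1 (\<Prod>k\<in>L1 - S1. x k) (\<Prod>k\<in>L1 - insert i S1. x k)
          (\<Prod>k\<in>L2 - S2. x k) (\<Prod>k\<in>L2 - insert j S2. x k)"
  using assms heavy_prob_bounds by (simp_all add: pivot_merge_def prod_split bilin_def algebra_simps)

end

context
  fixes q :: "nat \<Rightarrow> real" and l r :: btree
  assumes dist: "distinct (leaves (Node l r))"
    and q01: "\<forall>k\<in>set (leaves (Node l r)). 0 \<le> q k \<and> q k \<le> 1"
begin

private lemma merge_context:
  assumes "(S1, i, a) \<in> set_pmf (pivot_subtree q l)" "(S2, j, b) \<in> set_pmf (pivot_subtree q r)"
  shows "finite (set (leaves l)) \<and> finite (set (leaves r)) \<and> set (leaves l) \<inter> set (leaves r) = {} \<and>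
    S1 \<subseteq> set (leaves l) \<and> i \<in> set (leaves l) \<and> S2 \<subseteq> set (leaves r) \<and> j \<in> set (leaves r) \<and>
    0 \<le> a \<and> a \<le> 1 \<and> 0 \<le> b \<and> b \<le> 1 \<and> a = root_weight q l \<and> b = root_weight q r"
  using set_pivot_subtree[of l S1 i a q] set_pivot_subtree[of r S2 j b q] assms dist
    root_weight_bounds[of l q] root_weight_bounds[of r q] q01 by auto

private lemma gen_Node_eq:
  "gen_reject q (Node l r) x = measure_pmf.expectation (pivot_subtree q (Node l r))
      (\<lambda>(S, i, a). \<Prod>k\<in>set (leaves l) \<union> set (leaves r) - S. x k)"
  "gen_accept q (Node l r) x = measure_pmf.expectation (pivot_subtree q (Node l r))
      (\<lambda>(S, i, a). \<Prod>k\<in>set (leaves l) \<union> set (leaves r) - insert i S. x k)"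
  unfolding gen_reject_def gen_accept_def by simp_all

lemma gen_Node_light:
  assumes "root_weight q l + root_weight q r \<le> 1"
  defines "\<alpha> \<equiv> root_weight q l / (root_weight q l + root_weight q r)"
  shows "gen_reject q (Node l r) = (\<lambda>x. bilin 1 0 0 0 (gen_reject q l x) (gen_accept q l x) (gen_reject q r x) (gen_accept q r x))"
    and "gen_accept q (Node l r) = (\<lambda>x. bilin 0 (1 - \<alpha>) \<alpha> 0 (gen_reject q l x) (gen_accept q l x) (gen_reject q r x) (gen_accept q r x))"
  unfolding gen_Node_eq \<alpha>_def
  by (intro ext expectation_pivot_subtree_Node; use merge_context expectation_pivot_merge_light assms in metis)+

lemma gen_Node_heavy:
  assumes "\<not> root_weight q l + root_weight q r \<le> 1"
  defines "p \<equiv> (1 - root_weight q l) / (2 - root_weight q l - root_weight q r)"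
  shows "gen_reject q (Node l r) = (\<lambda>x. bilin 0 p (1 - p) 0 (gen_reject q l x) (gen_accept q l x) (gen_reject q r x) (gen_accept q r x))"
    and "gen_accept q (Node l r) = (\<lambda>x. bilin 0 0 0 1 (gen_reject q l x) (gen_accept q l x) (gen_reject q r x) (gen_accept q r x))"
  unfolding gen_Node_eq p_def
  by (intro ext expectation_pivot_subtree_Node; use merge_context expectation_pivot_merge_heavy assms in metis)+

end

lemma rayleigh_couple_gen:
  "distinct (leaves t) \<Longrightarrow> \<forall>k\<in>set (leaves t). 0 \<le> q k \<and> q k \<le> 1 \<Longrightarrow>
    rayleigh_couple (gen_reject q t) (gen_accept q t)"
proof (induction t)
  case (Leaf i)
  have "gen_reject q (Leaf i) = (\<lambda>x. x i)" "gen_accept q (Leaf i) = (\<lambda>x. 1)"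
    by (auto simp: gen_reject_def gen_accept_def)
  then show ?case using rayleigh_couple_coordinate by simp
next
  case (Node l r)
  have C: "rayleigh_couple (gen_reject q l) (gen_accept q l)" "rayleigh_couple (gen_reject q r) (gen_accept q r)"
    using Node by auto
  have disj: "set (leaves l) \<inter> set (leaves r) = {}" using Node.prems(1) by auto
  have w: "0 \<le> root_weight q l" "root_weight q l \<le> 1" "0 \<le> root_weight q r" "root_weight q r \<le> 1"
    using root_weight_bounds[of l q] root_weight_bounds[of r q] Node.prems(2) by auto
  show ?case
  proof (cases "root_weight q l + root_weight q r \<le> 1")
    case light: True
    show ?thesis unfolding gen_Node_light[OF Node.prems light]
      by (rule rayleigh_couple_light_merge[OF depends_only_on_gen_reject depends_only_on_gen_accept
            depends_only_on_gen_reject depends_only_on_gen_accept disj C]) (use w in \<open>auto simp: divide_le_eq_1\<close>)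
  next
    case heavy: False
    show ?thesis unfolding gen_Node_heavy[OF Node.prems heavy]
      by (rule rayleigh_couple_heavy_merge[OF depends_only_on_gen_reject depends_only_on_gen_accept
            depends_only_on_gen_reject depends_only_on_gen_accept disj C]) (use w heavy in \<open>auto simp: divide_le_eq_1\<close>)
  qed
qed

lemma finite_set_pivotal_sampling: "finite (set_pmf (pivotal_sampling q T))"
  unfolding pivotal_sampling_def by (simp add: finite_set_pivot_subtree)

definition complement_gen :: "'a set pmf \<Rightarrow> 'a set \<Rightarrow> ('a \<Rightarrow> real) \<Rightarrow> real" where
  "complement_gen \<mu> N x = measure_pmf.expectation \<mu> (\<lambda>X. \<Prod>k\<in>N - X. x k)"

context
  fixes q :: "nat \<Rightarrow> real" and T :: btree and N :: "nat set" and k :: nat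
  assumes dist: "distinct (leaves T)" and leaves_T: "set (leaves T) = N"
    and q01: "\<forall>i\<in>N. 0 \<le> q i \<and> q i \<le> 1" and sum_q: "(\<Sum>i\<in>N. q i) = real k"
begin

private lemma set_pivot_subtree_root:
  "(S, i, a) \<in> set_pmf (pivot_subtree q T) \<Longrightarrow>
    S \<subseteq> N \<and> i \<in> N \<and> i \<notin> S \<and> a = root_weight q T \<and> real (card S) + a = real k"
  using set_pivot_subtree[OF dist] leaves_T sum_q by auto

lemma root_weight_0_or_1: "root_weight q T = 0 \<or> root_weight q T = 1"
proof -
  obtain S i a where "(S, i, a) \<in> set_pmf (pivot_subtree q T)"
    using set_pmf_not_empty by (metis all_not_in_conv prod_cases3)
  then have e: "real (card S) + root_weight q T = real k"
    using set_pivot_subtree_root by auto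
  have "0 \<le> root_weight q T" "root_weight q T \<le> 1"
    using root_weight_bounds[of T q] q01 leaves_T by auto
  with e have "root_weight q T = real (k - card S)" "k - card S \<le> 1"
    by (simp_all add: of_nat_diff)
  then show ?thesis by (cases "k - card S") auto
qed

lemma set_pivotal_sampling:
  assumes "X \<in> set_pmf (pivotal_sampling q T)"
  shows "X \<subseteq> N \<and> card X = k"
proof -
  obtain S i a where m: "(S, i, a) \<in> set_pmf (pivot_subtree q T)"
    and X: "X = (if a = 1 then insert i S else S)"
    using assms unfolding pivotal_sampling_def by auto
  have h: "S \<subseteq> N" "i \<in> N" "i \<notin> S" "a = root_weight q T" "real (card S) + a = real k"
    using set_pivot_subtree_root[OF m] by auto
  have "finite S" using h(1) leaves_T finite_subset by blast
  then show ?thesis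
    using h X root_weight_0_or_1 by (cases "a = 1") auto
qed

lemma complement_gen_pivotal_sampling:
  "complement_gen (pivotal_sampling q T) N =
     (if root_weight q T = 1 then gen_accept q T else gen_reject q T)"
proof
  fix x
  have "complement_gen (pivotal_sampling q T) N x
      = measure_pmf.expectation (pivot_subtree q T)
          (\<lambda>(S, i, a). if root_weight q T = 1 then \<Prod>k\<in>N - insert i S. x k else \<Prod>k\<in>N - S. x k)"
    unfolding complement_gen_def pivotal_sampling_def integral_map_pmf
    by (rule expectation_cong_set_pmf) (use set_pivot_subtree_root in \<open>auto split: prod.splits\<close>)
  also have "\<dots> = (if root_weight q T = 1 then gen_accept q T x else gen_reject q T x)"
    unfolding gen_accept_def gen_reject_def leaves_T by (simp add: case_prod_unfold)
  finally show "complement_gen (pivotal_sampling q T) N x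
      = (if root_weight q T = 1 then gen_accept q T else gen_reject q T) x" by simp
qed

lemma rayleigh_pivotal_sampling: "rayleigh (complement_gen (pivotal_sampling q T) N)"
proof -
  have "rayleigh_couple (gen_reject q T) (gen_accept q T)"
    using rayleigh_couple_gen[OF dist] q01 leaves_T by simp
  then have "rayleigh (\<lambda>x. 0 * gen_reject q T x + 1 * gen_accept q T x)"
    "rayleigh (\<lambda>x. 1 * gen_reject q T x + 0 * gen_accept q T x)"
    unfolding rayleigh_couple_def by blast+
  then show ?thesis unfolding complement_gen_pivotal_sampling by simp
qed

end

lemma prob_all_eq_complement_gen:
  assumes "finite N" "A \<subseteq> N"
  shows "prob_all \<mu> A = complement_gen \<mu> N (\<lambda>k. if k \<in> A then 0 else 1)"
proof -
  have "(\<Prod>k\<in>N - X. if k \<in> A then 0 else 1 :: real) = indicator {X. A \<subseteq> X} X" for X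
  proof (cases "A \<subseteq> X")
    case True
    then show ?thesis by (subst prod.neutral) auto
  next
    case False
    then obtain k where "k \<in> A" "k \<notin> X" by auto
    with assms False show ?thesis by (subst prod_zero) auto
  qed
  then show ?thesis unfolding prob_all_def complement_gen_def by simp
qed

lemma prob_all_neg_correlated:
  fixes \<mu> :: "nat set pmf"
  assumes fin: "finite N" and R: "rayleigh (complement_gen \<mu> N)"
    and A: "A \<subseteq> N" and ij: "i \<in> N - A" "j \<in> N - A" "i \<noteq> j"
  shows "prob_all \<mu> (insert i (insert j A)) * prob_all \<mu> A \<le> prob_all \<mu> (insert i A) * prob_all \<mu> (insert j A)"
proof -
  define ind :: "nat set \<Rightarrow> nat \<Rightarrow> real" where "ind B k = (if k \<in> B then 0 else 1)" for B k
  have P: "prob_all \<mu> B = complement_gen \<mu> N (ind B)" if "B \<subseteq> N" for B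
    unfolding ind_def using prob_all_eq_complement_gen[OF fin that] .
  have "(ind A)(i := 0, j := 0) = ind (insert i (insert j A))" "(ind A)(i := 1, j := 1) = ind A"
       "(ind A)(i := 1, j := 0) = ind (insert j A)" "(ind A)(i := 0, j := 1) = ind (insert i A)"
    using ij unfolding ind_def by auto
  with R ij(3) have "complement_gen \<mu> N (ind (insert i (insert j A))) * complement_gen \<mu> N (ind A)
      \<le> complement_gen \<mu> N (ind (insert j A)) * complement_gen \<mu> N (ind (insert i A))"
    unfolding rayleigh_def by metis
  then show ?thesis using A ij by (simp add: P mult.commute)
qed


section \<open>Influences of homogeneous negatively correlated measures\<close>

lemma prob_all_antimono: "A \<subseteq> B \<Longrightarrow> prob_all \<mu> B \<le> prob_all \<mu> A"
  unfolding prob_all_def by (intro measure_pmf.finite_measure_mono) auto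

lemma prob_all_finite_support:
  assumes "finite (set_pmf \<mu>)"
  shows "prob_all \<mu> B = (\<Sum>X\<in>set_pmf \<mu>. if B \<subseteq> X then pmf \<mu> X else 0)"
proof -
  have "prob_all \<mu> B = measure_pmf.expectation \<mu> (indicator {X. B \<subseteq> X})"
    unfolding prob_all_def by simp
  also have "\<dots> = (\<Sum>X\<in>set_pmf \<mu>. indicator {X. B \<subseteq> X} X * pmf \<mu> X)"
    by (rule integral_measure_pmf_real[OF assms]) (simp add: set_pmf_iff)
  also have "\<dots> = (\<Sum>X\<in>set_pmf \<mu>. if B \<subseteq> X then pmf \<mu> X else 0)"
    by (intro sum.cong) auto
  finally show ?thesis .
qed

lemma sum_prob_all_insert:
  assumes fin: "finite N" "finite (set_pmf \<mu>)" and hom: "homogeneous k \<mu>"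
    and supp: "\<And>X. X \<in> set_pmf \<mu> \<Longrightarrow> X \<subseteq> N"
  shows "(\<Sum>j\<in>N. prob_all \<mu> (insert j A)) = real k * prob_all \<mu> A"
proof -
  have count: "(\<Sum>j\<in>N. if insert j A \<subseteq> X then pmf \<mu> X else 0)
      = real k * (if A \<subseteq> X then pmf \<mu> X else 0)" if X: "X \<in> set_pmf \<mu>" for X
  proof (cases "A \<subseteq> X")
    case True
    have "(\<Sum>j\<in>N. if insert j A \<subseteq> X then pmf \<mu> X else 0) = (\<Sum>j\<in>{j\<in>N. j \<in> X}. pmf \<mu> X)"
      unfolding sum.inter_filter[OF fin(1)] using True by (intro sum.cong) auto
    also have "{j\<in>N. j \<in> X} = X" using supp[OF X] by auto
    finally show ?thesis using True hom X by (simp add: homogeneous_def)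
  qed auto
  have "(\<Sum>j\<in>N. prob_all \<mu> (insert j A))
      = (\<Sum>X\<in>set_pmf \<mu>. \<Sum>j\<in>N. if insert j A \<subseteq> X then pmf \<mu> X else 0)"
    unfolding prob_all_finite_support[OF fin(2)] by (rule sum.swap)
  also have "\<dots> = (\<Sum>X\<in>set_pmf \<mu>. real k * (if A \<subseteq> X then pmf \<mu> X else 0))"
    by (rule sum.cong[OF refl count])
  also have "\<dots> = real k * prob_all \<mu> A"
    by (simp add: prob_all_finite_support[OF fin(2)] sum_distrib_left)
  finally show ?thesis .
qed

lemma sum_cond_prob:
  assumes "finite N" "finite (set_pmf \<mu>)" "homogeneous k \<mu>" "\<And>X. X \<in> set_pmf \<mu> \<Longrightarrow> X \<subseteq> N"
    and "prob_all \<mu> A > 0"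
  shows "(\<Sum>j\<in>N. cond_prob \<mu> j A) = real k"
  using sum_prob_all_insert[OF assms(1-4), of A] assms(5)
  by (simp add: cond_prob_def sum_divide_distrib[symmetric])

lemma cond_prob_self: "j \<in> A \<Longrightarrow> prob_all \<mu> A > 0 \<Longrightarrow> cond_prob \<mu> j A = 1"
  by (simp add: cond_prob_def insert_absorb)

lemma influence_eq_cond_prob_diff:
  assumes "prob_all \<mu> S > 0" "prob_all \<mu> (insert i S) > 0"
  shows "influence \<mu> S i j = cond_prob \<mu> j (insert i S) - cond_prob \<mu> j S"
  using assms by (simp add: influence_def cond_prob_self)

lemma influence_nonpos:
  assumes nc: "prob_all \<mu> (insert i (insert j S)) * prob_all \<mu> S \<le> prob_all \<mu> (insert i S) * prob_all \<mu> (insert j S)"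
    and pos: "prob_all \<mu> S > 0" "prob_all \<mu> (insert i S) > 0"
  shows "influence \<mu> S i j \<le> 0"
proof -
  have "prob_all \<mu> (insert j (insert i S)) / prob_all \<mu> (insert i S) \<le> prob_all \<mu> (insert j S) / prob_all \<mu> S"
    using nc pos by (simp add: divide_simps insert_commute mult.commute)
  then show ?thesis
    using pos by (simp add: influence_eq_cond_prob_diff cond_prob_def)
qed

lemma sum_abs_influence:
  assumes fin: "finite N" "finite (set_pmf \<mu>)" and hom: "homogeneous k \<mu>"
    and supp: "\<And>X. X \<in> set_pmf \<mu> \<Longrightarrow> X \<subseteq> N"
    and nc: "\<And>j. j \<in> N - insert i S \<Longrightarrow>
      prob_all \<mu> (insert i (insert j S)) * prob_all \<mu> S \<le> prob_all \<mu> (insert i S) * prob_all \<mu> (insert j S)"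
    and i: "i \<in> N - S" and pos: "prob_all \<mu> S > 0" "prob_all \<mu> (insert i S) > 0"
  shows "(\<Sum>j\<in>N. \<bar>influence \<mu> S i j\<bar>) = 2 - 2 * cond_prob \<mu> i S"
proof -
  have self: "influence \<mu> S i i = 1 - cond_prob \<mu> i S"
    using pos by (simp add: influence_eq_cond_prob_diff cond_prob_self)
  have "cond_prob \<mu> i S \<le> 1"
    using prob_all_antimono[of S "insert i S" \<mu>] pos by (auto simp: cond_prob_def)
  then have self_abs: "\<bar>influence \<mu> S i i\<bar> = influence \<mu> S i i" using self by simp
  have others: "\<bar>influence \<mu> S i j\<bar> = - influence \<mu> S i j" if "j \<in> N - {i}" for j
  proof (cases "j \<in> S")
    case False
    then show ?thesis using influence_nonpos[OF nc pos] that by simp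
  qed (simp add: influence_def)
  have "(\<Sum>j\<in>N. influence \<mu> S i j) = 0"
    using sum_cond_prob[OF fin hom supp] pos
    by (simp add: influence_eq_cond_prob_diff sum_subtractf)
  moreover have "(\<Sum>j\<in>N. influence \<mu> S i j) = influence \<mu> S i i + (\<Sum>j\<in>N - {i}. influence \<mu> S i j)"
    by (rule sum.remove) (use i fin(1) in auto)
  moreover have "(\<Sum>j\<in>N. \<bar>influence \<mu> S i j\<bar>) = \<bar>influence \<mu> S i i\<bar> + (\<Sum>j\<in>N - {i}. \<bar>influence \<mu> S i j\<bar>)"
    by (rule sum.remove) (use i fin(1) in auto)
  ultimately show ?thesis
    using self self_abs others by (simp add: sum_negf)
qed

lemma sum_abs_influence_if_rayleigh:
  assumes fin: "finite N" "finite (set_pmf \<mu>)" and hom: "homogeneous k \<mu>"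
    and supp: "\<And>X. X \<in> set_pmf \<mu> \<Longrightarrow> X \<subseteq> N" and R: "rayleigh (complement_gen \<mu> N)"
    and S: "S \<subseteq> N" "i \<in> N - S" and pos: "prob_all \<mu> S > 0" "prob_all \<mu> (insert i S) > 0"
  shows "(\<Sum>j\<in>N. \<bar>influence \<mu> S i j\<bar>) = 2 - 2 * cond_prob \<mu> i S"
  using fin hom supp _ S(2) pos
proof (rule sum_abs_influence)
  show "prob_all \<mu> (insert i (insert j S)) * prob_all \<mu> S \<le> prob_all \<mu> (insert i S) * prob_all \<mu> (insert j S)"
    if "j \<in> N - insert i S" for j
    using prob_all_neg_correlated[OF fin(1) R S(1), of i j] S(2) that by auto
qed

lemma one_sided_linf_indep_2:
  assumes "\<And>S i. S \<subseteq> N \<Longrightarrow> i \<in> N - S \<Longrightarrow> prob_all \<mu> S > 0 \<Longrightarrow> prob_all \<mu> (insert i S) > 0 \<Longrightarrow>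
    (\<Sum>j\<in>N. \<bar>influence \<mu> S i j\<bar>) = 2 - 2 * cond_prob \<mu> i S"
  shows "one_sided_linf_indep \<mu> N 2"
  unfolding one_sided_linf_indep_def
proof (intro allI impI ballI)
  fix S i assume S: "S \<subseteq> N" "prob_all \<mu> S > 0" "i \<in> N" "prob_all \<mu> (insert i S) > 0"
  show "(\<Sum>j\<in>N. \<bar>influence \<mu> S i j\<bar>) \<le> 2"
  proof (cases "i \<in> S")
    case True
    then have "influence \<mu> S i j = 0" for j by (simp add: influence_def insert_absorb)
    then show ?thesis by simp
  next
    case False
    have "0 \<le> cond_prob \<mu> i S" by (simp add: cond_prob_def prob_all_def)
    with False S assms show ?thesis by simp
  qed
qed

theorem mainTheorem5:
  fixes T :: btree and n k :: nat and q :: "nat \<Rightarrow> real"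
  assumes "distinct (leaves T)" and "set (leaves T) = {1..n}"
    and "\<And>i. i \<in> {1..n} \<Longrightarrow> 0 \<le> q i \<and> q i \<le> 1"
    and "(\<Sum>i\<in>{1..n}. q i) = real k"
  defines "\<mu> \<equiv> pivotal_sampling q T"
  shows "homogeneous k \<mu>
    \<and> (\<forall>S \<subseteq> {1..n}. prob_all \<mu> S > 0 \<longrightarrow>
         (\<forall>i \<in> {1..n} - S. prob_all \<mu> (insert i S) > 0 \<longrightarrow>
            (\<Sum>j\<in>{1..n}. \<bar>influence \<mu> S i j\<bar>) = 2 - 2 * cond_prob \<mu> i S
            \<and> 2 - 2 * cond_prob \<mu> i S \<le> 2))
    \<and> one_sided_linf_indep \<mu> {1..n} 2"
proof -
  have "\<forall>i\<in>{1..n}. 0 \<le> q i \<and> q i \<le> 1" using assms(3) by blast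
  note sampling = assms(1,2) this assms(4)
  have fin: "finite {1..n}" "finite (set_pmf \<mu>)"
    unfolding \<mu>_def by (simp_all add: finite_set_pivotal_sampling)
  have supp: "X \<subseteq> {1..n}" "card X = k" if "X \<in> set_pmf \<mu>" for X
    using set_pivotal_sampling[OF sampling] that unfolding \<mu>_def by auto
  then have hom: "homogeneous k \<mu>" by (simp add: homogeneous_def)
  have R: "rayleigh (complement_gen \<mu> {1..n})"
    unfolding \<mu>_def by (rule rayleigh_pivotal_sampling[OF sampling])
  note sum_eq = sum_abs_influence_if_rayleigh[OF fin hom supp(1) R]
  have "0 \<le> cond_prob \<mu> i S" for i S by (simp add: cond_prob_def prob_all_def)
  then show ?thesis using hom sum_eq one_sided_linf_indep_2[OF sum_eq] by auto
qed

end
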